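(* Let $m\ge 2$, let $\mathbb{Z}_m$ be the cyclic group of order $m$ with generator $t$, and let $\Gamma$ be a group acting non-trivially on $\mathbb{Z}_m$ by automorphisms. Let $A$ be a $\mathbb{Z}_m\rtimes\Gamma$-module, put $V=\mathbb{Q}(\mathbb{Z}_m)\otimes_{\mathbb{Z}(\mathbb{Z}_m\rtimes\Gamma)}A$ (which is isomorphic to $\mathbb{Q}\otimes A_\Gamma$), and let $D_*,N_*:V\to V$ be the endomorphisms induced by multiplication by $D=t+\dots+t^{m-1}-(m-1)$ and $N=1+t+\dots+t^{m-1}$ on $\mathbb{Q}(\mathbb{Z}_m)$. Then for every $n\ge1$ $${}_{\mathbb Q}H^\Gamma_{2n-1}(\mathbb{Z}_m,A)\cong \operatorname{Ker}D_*/\operatorname{Im}N_*,\qquad {}_{\mathbb Q}H^\Gamma_{2n}(\mathbb{Z}_m,A)\cong \operatorname{Ker}N_*/\operatorname{Im}D_*.$$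
   Context: For a $\Gamma$-group $G$ (group with $\Gamma$ acting by automorphisms), a $G\rtimes\Gamma$-module is an abelian group with $G$- and $\Gamma$-actions satisfying ${}^{\sigma}({}^{g}a)={}^{{}^{\sigma}g}({}^{\sigma}a)$; $A_\Gamma$ is the quotient of $A$ by the subgroup generated by ${}^{\gamma}a-a$. Let $B_*\to\mathbb{Z}$ be the bar resolution of $G$ ($B_0=\mathbb{Z}(G)$, $B_n$ free $\mathbb{Z}(G)$-module on symbols $[g_1,\dots,g_n]$) with $\Gamma$ acting by ${}^{\gamma}(g[g_1,\dots,g_n])={}^{\gamma}g[{}^{\gamma}g_1,\dots,{}^{\gamma}g_n]$, and $\Gamma$ acting trivially on $\mathbb{Q}$. The rational $\Gamma$-equivariant homology is ${}_{\mathbb Q}H^\Gamma_n(G,A)=H_n\big((B_*\otimes\mathbb{Q})\otimes_{\mathbb{Z}(G\rtimes\Gamma)}A\big)$. Tensor products over $\mathbb{Z}(G\rtimes\Gamma)$ use the standard conversion of left modules to right modules via inverses. *)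

theory Defs
  imports "HOL-Algebra.Algebra" "HOL-Library.Poly_Mapping"
begin

text \<open>The cyclic group Z_m is {0..<m} (type nat) written additively,
 generator t = 1, so t^k = k mod m.  Gamma is a HOL-Algebra group acting on Z_m by
 phi.  The abelian group A is the type 'a, with Z_m acting by rho and Gamma by sigma.
 A basis element g[g1,...,gn] of the bar resolution B_n is the list g # [g1,...,gn];
 B_n (x) Q is the Q-vector space of finitely supported rational combinations of
 such lists.\<close>

definition zm_aut_action :: "nat \<Rightarrow> ('g,'b) monoid_scheme \<Rightarrow> ('g \<Rightarrow> nat \<Rightarrow> nat) \<Rightarrow> bool" where
  "zm_aut_action m \<Gamma> \<phi> \<longleftrightarrow>
     (\<forall>\<gamma>\<in>carrier \<Gamma>. bij_betw (\<phi> \<gamma>) {..<m} {..<m}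
        \<and> (\<forall>g<m. \<forall>h<m. \<phi> \<gamma> ((g + h) mod m) = (\<phi> \<gamma> g + \<phi> \<gamma> h) mod m))
   \<and> (\<forall>\<gamma>\<in>carrier \<Gamma>. \<forall>\<delta>\<in>carrier \<Gamma>. \<forall>g<m. \<phi> (\<gamma> \<otimes>\<^bsub>\<Gamma>\<^esub> \<delta>) g = \<phi> \<gamma> (\<phi> \<delta> g))
   \<and> (\<forall>g<m. \<phi> \<one>\<^bsub>\<Gamma>\<^esub> g = g)"

definition zm_action_nontrivial :: "nat \<Rightarrow> ('g,'b) monoid_scheme \<Rightarrow> ('g \<Rightarrow> nat \<Rightarrow> nat) \<Rightarrow> bool" where
  "zm_action_nontrivial m \<Gamma> \<phi> \<longleftrightarrow> (\<exists>\<gamma>\<in>carrier \<Gamma>. \<exists>g<m. \<phi> \<gamma> g \<noteq> g)"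

text \<open>A is a Z_m \<rtimes> Gamma-module: (h,gamma).a = rho h (sigma gamma a).\<close>
definition sd_module :: "nat \<Rightarrow> ('g,'b) monoid_scheme \<Rightarrow> ('g \<Rightarrow> nat \<Rightarrow> nat)
    \<Rightarrow> (nat \<Rightarrow> 'a::ab_group_add \<Rightarrow> 'a) \<Rightarrow> ('g \<Rightarrow> 'a \<Rightarrow> 'a) \<Rightarrow> bool" where
  "sd_module m \<Gamma> \<phi> \<rho> \<sigma> \<longleftrightarrow>
     (\<forall>g<m. \<forall>a b. \<rho> g (a + b) = \<rho> g a + \<rho> g b)
   \<and> (\<forall>a. \<rho> 0 a = a)
   \<and> (\<forall>g<m. \<forall>h<m. \<forall>a. \<rho> ((g + h) mod m) a = \<rho> g (\<rho> h a))
   \<and> (\<forall>\<gamma>\<in>carrier \<Gamma>. \<forall>a b. \<sigma> \<gamma> (a + b) = \<sigma> \<gamma> a + \<sigma> \<gamma> b)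
   \<and> (\<forall>a. \<sigma> \<one>\<^bsub>\<Gamma>\<^esub> a = a)
   \<and> (\<forall>\<gamma>\<in>carrier \<Gamma>. \<forall>\<delta>\<in>carrier \<Gamma>. \<forall>a. \<sigma> (\<gamma> \<otimes>\<^bsub>\<Gamma>\<^esub> \<delta>) a = \<sigma> \<gamma> (\<sigma> \<delta> a))
   \<and> (\<forall>\<gamma>\<in>carrier \<Gamma>. \<forall>g<m. \<forall>a. \<sigma> \<gamma> (\<rho> g a) = \<rho> (\<phi> \<gamma> g) (\<sigma> \<gamma> a))"

definition qscale :: "rat \<Rightarrow> (nat list \<Rightarrow>\<^sub>0 rat) \<Rightarrow> (nat list \<Rightarrow>\<^sub>0 rat)" where
  "qscale c p = Poly_Mapping.map (\<lambda>v. c * v) p"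

definition qlin :: "(nat list \<Rightarrow> (nat list \<Rightarrow>\<^sub>0 rat)) \<Rightarrow> (nat list \<Rightarrow>\<^sub>0 rat) \<Rightarrow> (nat list \<Rightarrow>\<^sub>0 rat)" where
  "qlin f x = (\<Sum>l\<in>Poly_Mapping.keys x. qscale (Poly_Mapping.lookup x l) (f l))"

definition bar_basis :: "nat \<Rightarrow> nat \<Rightarrow> nat list set" where
  "bar_basis m n = {l. length l = n + 1 \<and> set l \<subseteq> {..<m}}"

definition BQ :: "nat \<Rightarrow> nat \<Rightarrow> (nat list \<Rightarrow>\<^sub>0 rat) set" where
  "BQ m n = {x. Poly_Mapping.keys x \<subseteq> bar_basis m n}"

text \<open>Bar differential on the basis element g[g1,...,gn] = g # gs (n \<ge> 1):
  g g1[g2..gn] + sum_{i=1}^{n-1} (-1)^i g[g1..g_i g_(i+1)..gn] + (-1)^n g[g1..g_(n-1)].\<close>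
definition bar_d :: "nat \<Rightarrow> nat list \<Rightarrow> (nat list \<Rightarrow>\<^sub>0 rat)" where
  "bar_d m l = (let g = hd l; gs = tl l; n = length gs in
     Poly_Mapping.single (((g + hd gs) mod m) # tl gs) 1
     + (\<Sum>i\<in>{1..<n}. Poly_Mapping.single
          (g # (take (i - 1) gs @ [(gs ! (i - 1) + gs ! i) mod m] @ drop (i + 1) gs)) ((-1) ^ i))
     + Poly_Mapping.single (g # butlast gs) ((-1) ^ n))"

text \<open>Action of (h,gamma) \<in> Z_m \<rtimes> Gamma on basis elements:
  (h,gamma).(g[g1..gn]) = (h + gamma g)[gamma g1..gamma gn].\<close>
definition sd_list :: "nat \<Rightarrow> ('g \<Rightarrow> nat \<Rightarrow> nat) \<Rightarrow> nat \<Rightarrow> 'g \<Rightarrow> nat list \<Rightarrow> nat list" where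
  "sd_list m \<phi> h \<gamma> l = ((h + \<phi> \<gamma> (hd l)) mod m) # map (\<phi> \<gamma>) (tl l)"

definition sd_act :: "nat \<Rightarrow> ('g \<Rightarrow> nat \<Rightarrow> nat) \<Rightarrow> nat \<Rightarrow> 'g \<Rightarrow> (nat list \<Rightarrow>\<^sub>0 rat) \<Rightarrow> (nat list \<Rightarrow>\<^sub>0 rat)" where
  "sd_act m \<phi> h \<gamma> x = qlin (\<lambda>l. Poly_Mapping.single (sd_list m \<phi> h \<gamma> l) 1) x"

text \<open>Action of the inverse (h,gamma)^{-1} = (gamma^{-1}(-h), gamma^{-1}).\<close>
definition sd_act_inv :: "nat \<Rightarrow> ('g,'b) monoid_scheme \<Rightarrow> ('g \<Rightarrow> nat \<Rightarrow> nat) \<Rightarrow> nat \<Rightarrow> 'g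
    \<Rightarrow> (nat list \<Rightarrow>\<^sub>0 rat) \<Rightarrow> (nat list \<Rightarrow>\<^sub>0 rat)" where
  "sd_act_inv m \<Gamma> \<phi> h \<gamma> x =
     sd_act m \<phi> (\<phi> (inv\<^bsub>\<Gamma>\<^esub> \<gamma>) ((m - h) mod m)) (inv\<^bsub>\<Gamma>\<^esub> \<gamma>) x"

text \<open>Presented as the free abelian group on (B_n (x) Q) \<times> A modulo biadditivity and
  the balancing relations  x.r (x) a = x (x) r.a  for r \<in> Z_m \<rtimes> Gamma, where the right
  action is x.r = r^{-1} x.\<close>
definition tens_rel :: "nat \<Rightarrow> ('g,'b) monoid_scheme \<Rightarrow> ('g \<Rightarrow> nat \<Rightarrow> nat)
    \<Rightarrow> (nat \<Rightarrow> 'a::ab_group_add \<Rightarrow> 'a) \<Rightarrow> ('g \<Rightarrow> 'a \<Rightarrow> 'a) \<Rightarrow> nat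
    \<Rightarrow> (((nat list \<Rightarrow>\<^sub>0 rat) \<times> 'a) \<Rightarrow>\<^sub>0 int) set" where
  "tens_rel m \<Gamma> \<phi> \<rho> \<sigma> n =
     {frag_of (x + y, a) - frag_of (x, a) - frag_of (y, a) | x y a. x \<in> BQ m n \<and> y \<in> BQ m n}
   \<union> {frag_of (x, a + b) - frag_of (x, a) - frag_of (x, b) | x a b. x \<in> BQ m n}
   \<union> {frag_of (sd_act_inv m \<Gamma> \<phi> h \<gamma> x, a) - frag_of (x, \<rho> h (\<sigma> \<gamma> a)) | x h \<gamma> a.
        x \<in> BQ m n \<and> h < m \<and> \<gamma> \<in> carrier \<Gamma>}"

definition tens_free :: "nat \<Rightarrow> nat \<Rightarrow> (((nat list \<Rightarrow>\<^sub>0 rat) \<times> 'a) \<Rightarrow>\<^sub>0 int) monoid" where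
  "tens_free m n = free_Abelian_group (BQ m n \<times> UNIV)"

definition tens_sub :: "nat \<Rightarrow> ('g,'b) monoid_scheme \<Rightarrow> ('g \<Rightarrow> nat \<Rightarrow> nat)
    \<Rightarrow> (nat \<Rightarrow> 'a::ab_group_add \<Rightarrow> 'a) \<Rightarrow> ('g \<Rightarrow> 'a \<Rightarrow> 'a) \<Rightarrow> nat
    \<Rightarrow> (((nat list \<Rightarrow>\<^sub>0 rat) \<times> 'a) \<Rightarrow>\<^sub>0 int) set" where
  "tens_sub m \<Gamma> \<phi> \<rho> \<sigma> n = generate (tens_free m n) (tens_rel m \<Gamma> \<phi> \<rho> \<sigma> n)"

definition chainC where
  "chainC m \<Gamma> \<phi> \<rho> \<sigma> n = tens_free m n Mod tens_sub m \<Gamma> \<phi> \<rho> \<sigma> n"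

definition induced :: "(('c \<Rightarrow>\<^sub>0 int) \<Rightarrow> ('d \<Rightarrow>\<^sub>0 int)) \<Rightarrow> ('d \<Rightarrow>\<^sub>0 int) set
     \<Rightarrow> ('c \<Rightarrow>\<^sub>0 int) set \<Rightarrow> ('d \<Rightarrow>\<^sub>0 int) set" where
  "induced f R Q = {y. \<exists>c\<in>Q. \<exists>r\<in>R. y = f c + r}"

definition tens_map :: "(nat list \<Rightarrow> (nat list \<Rightarrow>\<^sub>0 rat))
    \<Rightarrow> (((nat list \<Rightarrow>\<^sub>0 rat) \<times> 'a) \<Rightarrow>\<^sub>0 int) \<Rightarrow> (((nat list \<Rightarrow>\<^sub>0 rat) \<times> 'a) \<Rightarrow>\<^sub>0 int)" where
  "tens_map f = frag_extend (\<lambda>(x, a). frag_of (qlin f x, a))"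

definition bdry where
  "bdry m \<Gamma> \<phi> \<rho> \<sigma> n = induced (tens_map (bar_d m)) (tens_sub m \<Gamma> \<phi> \<rho> \<sigma> (n - 1))"

definition QHGamma where
  "QHGamma m \<Gamma> \<phi> \<rho> \<sigma> k =
     (chainC m \<Gamma> \<phi> \<rho> \<sigma> k)\<lparr>carrier :=
        {Y \<in> carrier (chainC m \<Gamma> \<phi> \<rho> \<sigma> k).
           bdry m \<Gamma> \<phi> \<rho> \<sigma> k Y = \<one>\<^bsub>chainC m \<Gamma> \<phi> \<rho> \<sigma> (k - 1)\<^esub>}\<rparr>
     Mod (bdry m \<Gamma> \<phi> \<rho> \<sigma> (k + 1) ` carrier (chainC m \<Gamma> \<phi> \<rho> \<sigma> (k + 1)))"

text \<open>Q(Z_m) = B_0 (x) Q (basis [g]); V = C_0.\<close>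
definition Vsp where "Vsp m \<Gamma> \<phi> \<rho> \<sigma> = chainC m \<Gamma> \<phi> \<rho> \<sigma> 0"

definition mulD :: "nat \<Rightarrow> nat list \<Rightarrow> (nat list \<Rightarrow>\<^sub>0 rat)" where
  "mulD m l = (\<Sum>k\<in>{1..<m}. Poly_Mapping.single [(hd l + k) mod m] 1)
              - Poly_Mapping.single [hd l] (of_nat (m - 1))"

definition mulN :: "nat \<Rightarrow> nat list \<Rightarrow> (nat list \<Rightarrow>\<^sub>0 rat)" where
  "mulN m l = (\<Sum>k\<in>{0..<m}. Poly_Mapping.single [(hd l + k) mod m] 1)"

definition Dstar where
  "Dstar m \<Gamma> \<phi> \<rho> \<sigma> = induced (tens_map (mulD m)) (tens_sub m \<Gamma> \<phi> \<rho> \<sigma> 0)"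

definition Nstar where
  "Nstar m \<Gamma> \<phi> \<rho> \<sigma> = induced (tens_map (mulN m)) (tens_sub m \<Gamma> \<phi> \<rho> \<sigma> 0)"

definition ker_mod_im where
  "ker_mod_im V f g = V\<lparr>carrier := {Y \<in> carrier V. f Y = \<one>\<^bsub>V\<^esub>}\<rparr> Mod (g ` carrier V)"

end

theory Submission
  imports Defs
begin

text \<open>Over \<open>\<rat>\<close> the bar resolution of the finite group \<open>\<int>\<^sub>m\<close> has a contracting homotopy that is
  equivariant for \<open>\<int>\<^sub>m \<rtimes> \<Gamma>\<close>: average the standard contraction
  \<open>g[g\<^sub>1,\<dots>,g\<^sub>n] \<mapsto> [g,g\<^sub>1,\<dots>,g\<^sub>n]\<close> over the group, which gives
  \<open>s(g[g\<^sub>1,\<dots>,g\<^sub>n]) = (1/m) \<Sum>\<^sub>j j[g - j, g\<^sub>1,\<dots>,g\<^sub>n]\<close>.  It survives tensoring with \<open>A\<close>, so every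
  cycle of positive degree is a boundary and all the homology groups vanish.  On \<open>V\<close> the identity
  \<open>(N - D)/m = 1\<close> plays the same role: it gives \<open>Ker D\<^sub>* \<subseteq> Im N\<^sub>*\<close> and \<open>Ker N\<^sub>* \<subseteq> Im D\<^sub>*\<close>, so both
  right-hand sides vanish too.\<close>

section \<open>\<rat>-linear maps on list bases\<close>

lemma lookup_qscale [simp]: "Poly_Mapping.lookup (qscale c p) k = c * Poly_Mapping.lookup p k"
  by (simp add: qscale_def Poly_Mapping.map.rep_eq when_def)

lemma qscale_add: "qscale c (p + r) = qscale c p + qscale c r"
  by (rule poly_mapping_eqI) (simp add: lookup_add algebra_simps)

lemma qscale_diff: "qscale c (p - r) = qscale c p - qscale c r"
  by (rule poly_mapping_eqI) (simp add: lookup_minus algebra_simps)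

lemma qscale_left_distrib: "qscale (a + b) p = qscale a p + qscale b p"
  by (rule poly_mapping_eqI) (simp add: lookup_add algebra_simps)

lemma qscale_zero [simp]: "qscale 0 p = 0" "qscale c 0 = 0"
  by (rule poly_mapping_eqI, simp)+

lemma qscale_one [simp]: "qscale 1 p = p"
  by (rule poly_mapping_eqI) simp

lemma qscale_qscale [simp]: "qscale a (qscale b p) = qscale (a * b) p"
  by (rule poly_mapping_eqI) simp

lemma qscale_minus_left: "qscale (- c) p = - qscale c p"
  by (rule poly_mapping_eqI) simp

lemma qscale_single [simp]: "qscale c (Poly_Mapping.single l d) = Poly_Mapping.single l (c * d)"
  by (rule poly_mapping_eqI) (simp add: lookup_single when_def)

lemma qscale_sum: "qscale c (sum f A) = (\<Sum>a\<in>A. qscale c (f a))"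
  by (induction A rule: infinite_finite_induct) (auto simp: qscale_add)

lemma keys_qscale: "Poly_Mapping.keys (qscale c p) \<subseteq> Poly_Mapping.keys p"
  by (auto simp: in_keys_iff)

lemma qlin_eq_sum_superset:
  assumes "finite S" "Poly_Mapping.keys x \<subseteq> S"
  shows "qlin f x = (\<Sum>l\<in>S. qscale (Poly_Mapping.lookup x l) (f l))"
  unfolding qlin_def by (rule sum.mono_neutral_left) (use assms in \<open>auto simp: in_keys_iff\<close>)

lemma qlin_add: "qlin f (x + y) = qlin f x + qlin f y"
proof -
  let ?S = "Poly_Mapping.keys x \<union> Poly_Mapping.keys y"
  have "qlin f (x + y) = (\<Sum>l\<in>?S. qscale (Poly_Mapping.lookup (x + y) l) (f l))"
    by (rule qlin_eq_sum_superset) (auto simp: keys_add)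
  also have "\<dots> = (\<Sum>l\<in>?S. qscale (Poly_Mapping.lookup x l) (f l))
                 + (\<Sum>l\<in>?S. qscale (Poly_Mapping.lookup y l) (f l))"
    by (simp add: lookup_add qscale_left_distrib sum.distrib)
  also have "\<dots> = qlin f x + qlin f y"
    by (simp add: qlin_eq_sum_superset[of ?S x f] qlin_eq_sum_superset[of ?S y f])
  finally show ?thesis .
qed

lemma qlin_zero [simp]: "qlin f 0 = 0"
  by (simp add: qlin_def)

lemma qlin_diff: "qlin f (x - y) = qlin f x - qlin f y"
  using qlin_add[of f "x - y" y] by (simp add: eq_diff_eq)

lemma qlin_sum: "qlin f (sum g A) = (\<Sum>a\<in>A. qlin f (g a))"
  by (induction A rule: infinite_finite_induct) (auto simp: qlin_add)

lemma qlin_single [simp]: "qlin f (Poly_Mapping.single l c) = qscale c (f l)"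
  using qlin_eq_sum_superset[of "{l}" "Poly_Mapping.single l c" f] by simp

lemma qlin_qscale: "qlin f (qscale c x) = qscale c (qlin f x)"
proof -
  have "qlin f (qscale c x)
      = (\<Sum>l\<in>Poly_Mapping.keys x. qscale (Poly_Mapping.lookup (qscale c x) l) (f l))"
    by (rule qlin_eq_sum_superset) (auto simp: keys_qscale)
  then show ?thesis by (simp add: qlin_def qscale_sum)
qed

lemma qlin_cong: "(\<And>l. l \<in> Poly_Mapping.keys x \<Longrightarrow> f l = g l) \<Longrightarrow> qlin f x = qlin g x"
  by (simp add: qlin_def)

lemma qlin_fun_add: "qlin (\<lambda>l. f l + g l) x = qlin f x + qlin g x"
  by (simp add: qlin_def qscale_add sum.distrib)

lemma qlin_compose: "qlin g (qlin f x) = qlin (\<lambda>l. qlin g (f l)) x"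
proof -
  have "qlin g (qlin f x)
      = (\<Sum>l\<in>Poly_Mapping.keys x. qlin g (qscale (Poly_Mapping.lookup x l) (f l)))"
    by (subst qlin_def[of f]) (rule qlin_sum)
  then show ?thesis by (simp add: qlin_qscale qlin_def[of "\<lambda>l. qlin g (f l)"])
qed

lemma qlin_single_one: "qlin (\<lambda>l. Poly_Mapping.single l 1) x = x"
  by (rule poly_mapping_eqI) (simp add: qlin_def lookup_sum lookup_single when_def in_keys_iff)

lemma qlin_single_scalar: "qlin (\<lambda>l. Poly_Mapping.single l c) x = qscale c x"
  by (rule poly_mapping_eqI) (simp add: qlin_def lookup_sum lookup_single when_def in_keys_iff)

lemma keys_qlin: "Poly_Mapping.keys (qlin f x) \<subseteq> (\<Union>l\<in>Poly_Mapping.keys x. Poly_Mapping.keys (f l))"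
  unfolding qlin_def using keys_sum keys_qscale by fastforce

lemma BQ_add: "x \<in> BQ m n \<Longrightarrow> y \<in> BQ m n \<Longrightarrow> x + y \<in> BQ m n"
  using keys_add[of x y] by (auto simp: BQ_def)

lemma BQ_diff: "x \<in> BQ m n \<Longrightarrow> y \<in> BQ m n \<Longrightarrow> x - y \<in> BQ m n"
  using keys_diff[of x y] by (auto simp: BQ_def)

lemma BQ_sum: "(\<And>i. i \<in> I \<Longrightarrow> f i \<in> BQ m n) \<Longrightarrow> sum f I \<in> BQ m n"
  using keys_sum[of f I] unfolding BQ_def by blast

lemma BQ_single: "l \<in> bar_basis m n \<Longrightarrow> Poly_Mapping.single l c \<in> BQ m n"
  by (auto simp: BQ_def)

lemma BQ_qlin:
  assumes "x \<in> BQ m k" "\<And>l. l \<in> bar_basis m k \<Longrightarrow> f l \<in> BQ m j"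
  shows "qlin f x \<in> BQ m j"
  using keys_qlin[of f x] assms by (auto simp: BQ_def)

section \<open>Tensoring \<rat>-linear maps with \<open>A\<close>\<close>

lemma carrier_tens_free:
  "x \<in> carrier (tens_free m n) \<longleftrightarrow> Poly_Mapping.keys x \<subseteq> BQ m n \<times> UNIV"
  by (simp add: tens_free_def)

lemma tens_free_add:
  "x \<in> carrier (tens_free m n) \<Longrightarrow> y \<in> carrier (tens_free m n) \<Longrightarrow> x + y \<in> carrier (tens_free m n)"
  using keys_add[of x y] by (auto simp: carrier_tens_free)

lemma tens_free_diff:
  "x \<in> carrier (tens_free m n) \<Longrightarrow> y \<in> carrier (tens_free m n) \<Longrightarrow> x - y \<in> carrier (tens_free m n)"
  using keys_diff[of x y] by (auto simp: carrier_tens_free)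

lemma tens_map_add: "tens_map f (x + y) = tens_map f x + tens_map f y"
  by (simp add: tens_map_def frag_extend_add)

lemma tens_map_diff: "tens_map f (x - y) = tens_map f x - tens_map f y"
  by (simp add: tens_map_def frag_extend_diff)

lemma tens_map_zero [simp]: "tens_map f 0 = 0"
  by (simp add: tens_map_def)

lemma tens_map_frag_of [simp]: "tens_map f (frag_of (x, a)) = frag_of (qlin f x, a)"
  by (simp add: tens_map_def)

lemma tens_map_compose: "tens_map g (tens_map f c) = tens_map (\<lambda>l. qlin g (f l)) c"
proof -
  have "tens_map f c = frag_extend (frag_of \<circ> (\<lambda>(x, a). (qlin f x, a))) c"
    unfolding tens_map_def by (rule frag_extend_eq) auto
  then have "tens_map g (tens_map f c)
      = frag_extend ((\<lambda>(x, a). frag_of (qlin g x, a)) \<circ> (\<lambda>(x, a). (qlin f x, a))) c"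
    unfolding tens_map_def[of g] by (simp add: frag_extend_compose)
  also have "\<dots> = tens_map (\<lambda>l. qlin g (f l)) c"
    unfolding tens_map_def by (rule frag_extend_eq) (auto simp: qlin_compose)
  finally show ?thesis .
qed

lemma tens_map_single_one: "tens_map (\<lambda>l. Poly_Mapping.single l 1) c = c"
proof -
  have "tens_map (\<lambda>l. Poly_Mapping.single l 1) c = frag_extend frag_of c"
    unfolding tens_map_def by (rule frag_extend_eq) (auto simp: qlin_single_one)
  then show ?thesis by (metis frag_expansion)
qed

lemma tens_map_cong:
  assumes "c \<in> carrier (tens_free m k)" "\<And>l. l \<in> bar_basis m k \<Longrightarrow> f l = g l"
  shows "tens_map f c = tens_map g c"
  unfolding tens_map_def
proof (rule frag_extend_eq)
  fix z assume z: "z \<in> Poly_Mapping.keys c"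
  obtain x a where xa: "z = (x, a)" by (cases z)
  have "x \<in> BQ m k" using z xa assms(1) by (auto simp: carrier_tens_free)
  then have "qlin f x = qlin g x" using assms(2) by (intro qlin_cong) (auto simp: BQ_def)
  then show "(\<lambda>(x, a). frag_of (qlin f x, a)) z = (\<lambda>(x, a). frag_of (qlin g x, a)) z"
    using xa by simp
qed

section \<open>The bar differential and the averaged cone\<close>

lemma mod_add_right_inj:
  "(h + x) mod m = (h + y) mod (m::nat) \<Longrightarrow> x < m \<Longrightarrow> y < m \<Longrightarrow> x = y"
proof (induction x y rule: linorder_wlog)
  case (le a b)
  then have "m dvd (h + b) - (h + a)" using mod_eq_dvd_iff_nat[of "h + a" "h + b" m] by simp
  then have "m dvd b - a" by simp
  then show ?case
    using le by (metis diff_is_0_eq dvd_imp_le le_antisym less_imp_diff_less less_le_not_le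
        le_refl zero_less_diff)
qed (metis)

lemma bij_betw_add_mod:
  assumes "0 < (m::nat)" shows "bij_betw (\<lambda>k. (h + k) mod m) {..<m} {..<m}"
proof -
  have "inj_on (\<lambda>k. (h + k) mod m) {..<m}"
    by (rule inj_onI, rule mod_add_right_inj) auto
  moreover have "(\<lambda>k. (h + k) mod m) ` {..<m} \<subseteq> {..<m}" using assms by auto
  ultimately show ?thesis by (simp add: bij_betw_def endo_inj_surj)
qed

lemma mod_sub_eqI:
  "y < m \<Longrightarrow> (z::nat) < m \<Longrightarrow> (z + y) mod m = x \<Longrightarrow> z = (x + m - y) mod m"
  using mod_less mod_if nat_add_left_cancel_less add_diff_inverse_nat less_imp_diff_less
  by fastforce

lemma mod_sub_add_mod:
  "j < m \<Longrightarrow> (g::nat) < m \<Longrightarrow> ((g + m - j) mod m + b) mod m = ((g + b) mod m + m - j) mod m"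
  by (smt (verit, del_insts) add.assoc add.commute add_diff_cancel_left'
    add_diff_inverse_nat mod_add_right_eq order_less_imp_not_less)

lemma add_mod_sub_mod: "j < m \<Longrightarrow> (g::nat) < m \<Longrightarrow> (j + (g + m - j) mod m) mod m = g"
  by (metis mod_less mod_add_right_eq add_diff_inverse_nat mod_add_self1 add.commute
      order_less_imp_not_less trans_less_add1)

definition bar_merge :: "nat \<Rightarrow> nat list \<Rightarrow> nat \<Rightarrow> nat list" where
  "bar_merge m gs i = take (i - 1) gs @ [(gs ! (i - 1) + gs ! i) mod m] @ drop (i + 1) gs"

lemma bar_d_Cons: "bar_d m (g # gs) = Poly_Mapping.single (((g + hd gs) mod m) # tl gs) 1
   + (\<Sum>i\<in>{1..<length gs}. Poly_Mapping.single (g # bar_merge m gs i) ((-1) ^ i))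
   + Poly_Mapping.single (g # butlast gs) ((-1) ^ length gs)"
  by (simp add: bar_d_def bar_merge_def Let_def)

lemma length_bar_merge: "1 \<le> i \<Longrightarrow> i < length gs \<Longrightarrow> length (bar_merge m gs i) = length gs - 1"
  by (simp add: bar_merge_def)

lemma set_bar_merge: "0 < m \<Longrightarrow> set gs \<subseteq> {..<m} \<Longrightarrow> set (bar_merge m gs i) \<subseteq> {..<m}"
  unfolding bar_merge_def using set_take_subset[of "i - 1" gs] set_drop_subset[of "i + 1" gs]
  by auto

lemma bar_merge_Cons_1: "gs \<noteq> [] \<Longrightarrow> bar_merge m (x # gs) 1 = ((x + hd gs) mod m) # tl gs"
  by (cases gs) (simp_all add: bar_merge_def)

lemma bar_merge_Cons: "bar_merge m (x # gs) (Suc (Suc i)) = x # bar_merge m gs (Suc i)"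
  by (simp add: bar_merge_def)

text \<open>With \<open>g = j + x\<close>, the first face of the cone term \<open>j[x, g\<^sub>1, \<dots>]\<close> is \<open>g[g\<^sub>1, \<dots>]\<close>, and the
  remaining faces are, with opposite sign, the \<open>j\<close>-th cone terms of the faces of
  \<open>g[g\<^sub>1, \<dots>]\<close>; averaged over \<open>j\<close> this is \<open>d s + s d = 1\<close>.\<close>
lemma bar_d_Cons_Cons:
  assumes "gs \<noteq> []"
  shows "bar_d m (j # x # gs) = Poly_Mapping.single (((j + x) mod m) # gs) 1
      - (Poly_Mapping.single (j # ((x + hd gs) mod m) # tl gs) 1
         + (\<Sum>i\<in>{1..<length gs}. Poly_Mapping.single (j # x # bar_merge m gs i) ((-1) ^ i))
         + Poly_Mapping.single (j # x # butlast gs) ((-1) ^ length gs))"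
proof -
  let ?k = "length gs"
  have "{1..<Suc ?k} = insert 1 {Suc 1..<Suc ?k}" using assms by auto
  then have "(\<Sum>i\<in>{1..<Suc ?k}. Poly_Mapping.single (j # bar_merge m (x # gs) i) ((-1::rat) ^ i))
      = Poly_Mapping.single (j # bar_merge m (x # gs) 1) (-1)
        + (\<Sum>i\<in>{Suc 1..<Suc ?k}. Poly_Mapping.single (j # bar_merge m (x # gs) i) ((-1) ^ i))"
    by (simp add: sum.insert)
  also have "(\<Sum>i\<in>{Suc 1..<Suc ?k}. Poly_Mapping.single (j # bar_merge m (x # gs) i) ((-1::rat) ^ i))
      = (\<Sum>i\<in>{1..<?k}. Poly_Mapping.single (j # bar_merge m (x # gs) (Suc i)) ((-1) ^ Suc i))"
    by (rule sum.shift_bounds_Suc_ivl)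
  also have "\<dots> = - (\<Sum>i\<in>{1..<?k}. Poly_Mapping.single (j # x # bar_merge m gs i) ((-1) ^ i))"
    by (auto intro!: sum.cong simp: Suc_le_eq gr0_conv_Suc bar_merge_Cons single_uminus
        simp flip: sum_negf)
  finally show ?thesis
    using assms by (simp add: bar_d_Cons bar_merge_Cons_1[unfolded One_nat_def] single_uminus)
qed

definition avg_cone :: "nat \<Rightarrow> nat list \<Rightarrow> (nat list \<Rightarrow>\<^sub>0 rat)" where
  "avg_cone m l = (\<Sum>j<m. Poly_Mapping.single (j # ((hd l + m - j) mod m) # tl l) (1 / of_nat m))"

section \<open>Kernels modulo images in the chain groups\<close>

text \<open>Unlike \<open>trivial_group\<close> this does not require a group: the factor structures below are
  never shown to be groups, and a one-point carrier with idempotent point already fixes the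
  structure up to isomorphism.\<close>
definition trivial_monoid :: "('a, 'b) monoid_scheme \<Rightarrow> bool" where
  "trivial_monoid G \<longleftrightarrow> carrier G = {\<one>\<^bsub>G\<^esub>} \<and> \<one>\<^bsub>G\<^esub> \<otimes>\<^bsub>G\<^esub> \<one>\<^bsub>G\<^esub> = \<one>\<^bsub>G\<^esub>"

lemma trivial_monoids_isomorphic:
  assumes "trivial_monoid G" "trivial_monoid G'"
  shows "G \<cong> G'"
proof (rule is_isoI)
  show "(\<lambda>_. \<one>\<^bsub>G'\<^esub>) \<in> iso G G'"
    using assms unfolding trivial_monoid_def iso_def hom_def bij_betw_def inj_on_def by auto
qed

locale zm_equivariant_chains =
  fixes m :: nat and \<Gamma> :: "('g, 'b) monoid_scheme" and \<phi> :: "'g \<Rightarrow> nat \<Rightarrow> nat"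
    and \<rho> :: "nat \<Rightarrow> 'a::ab_group_add \<Rightarrow> 'a" and \<sigma> :: "'g \<Rightarrow> 'a \<Rightarrow> 'a"
  assumes m_pos: "0 < m" and group_\<Gamma>: "group \<Gamma>" and aut_action: "zm_aut_action m \<Gamma> \<phi>"
begin

abbreviation F where "F n \<equiv> tens_free m n :: (((nat list \<Rightarrow>\<^sub>0 rat) \<times> 'a) \<Rightarrow>\<^sub>0 int) monoid"
abbreviation R where "R n \<equiv> tens_rel m \<Gamma> \<phi> \<rho> \<sigma> n"
abbreviation H where "H n \<equiv> tens_sub m \<Gamma> \<phi> \<rho> \<sigma> n"
abbreviation CC where "CC n \<equiv> chainC m \<Gamma> \<phi> \<rho> \<sigma> n"
abbreviation coset where "coset n a \<equiv> (\<lambda>h. h + a) ` H n"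

lemma \<phi>_less: "\<gamma> \<in> carrier \<Gamma> \<Longrightarrow> g < m \<Longrightarrow> \<phi> \<gamma> g < m"
  using aut_action unfolding zm_aut_action_def bij_betw_def by auto

lemma \<phi>_add_mod:
  "\<gamma> \<in> carrier \<Gamma> \<Longrightarrow> g < m \<Longrightarrow> h < m \<Longrightarrow> \<phi> \<gamma> ((g + h) mod m) = (\<phi> \<gamma> g + \<phi> \<gamma> h) mod m"
  using aut_action unfolding zm_aut_action_def by auto

lemma \<phi>_bij: "\<gamma> \<in> carrier \<Gamma> \<Longrightarrow> bij_betw (\<phi> \<gamma>) {..<m} {..<m}"
  using aut_action unfolding zm_aut_action_def by auto

lemma bij_betw_affine_\<phi>: "\<gamma> \<in> carrier \<Gamma> \<Longrightarrow> bij_betw (\<lambda>x. (h + \<phi> \<gamma> x) mod m) {..<m} {..<m}"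
  using bij_betw_trans[OF \<phi>_bij bij_betw_add_mod[OF m_pos]] by (simp add: comp_def)

lemma sd_list_in_bar_basis:
  assumes "l \<in> bar_basis m n" "\<gamma> \<in> carrier \<Gamma>"
  shows "sd_list m \<phi> h \<gamma> l \<in> bar_basis m n"
proof -
  obtain g gs where "l = g # gs" "length gs = n" "set gs \<subseteq> {..<m}"
    using assms(1) by (cases l) (auto simp: bar_basis_def)
  then show ?thesis
    using \<phi>_less[OF assms(2)] m_pos by (auto simp: bar_basis_def sd_list_def)
qed

lemma sd_list_Cons: "sd_list m \<phi> h \<gamma> (y # ys) = ((h + \<phi> \<gamma> y) mod m) # map (\<phi> \<gamma>) ys"
  by (simp add: sd_list_def)

lemma sd_act_single:
  "sd_act m \<phi> h \<gamma> (Poly_Mapping.single l c) = Poly_Mapping.single (sd_list m \<phi> h \<gamma> l) c"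
  by (simp add: sd_act_def qlin_single_scalar)

lemma sd_act_add: "sd_act m \<phi> h \<gamma> (x + y) = sd_act m \<phi> h \<gamma> x + sd_act m \<phi> h \<gamma> y"
  by (simp add: sd_act_def qlin_add)

lemma sd_act_diff: "sd_act m \<phi> h \<gamma> (x - y) = sd_act m \<phi> h \<gamma> x - sd_act m \<phi> h \<gamma> y"
  by (simp add: sd_act_def qlin_diff)

lemma sd_act_sum: "sd_act m \<phi> h \<gamma> (sum f I) = (\<Sum>i\<in>I. sd_act m \<phi> h \<gamma> (f i))"
  by (simp add: sd_act_def qlin_sum)

lemma sd_act_in_BQ: "x \<in> BQ m n \<Longrightarrow> \<gamma> \<in> carrier \<Gamma> \<Longrightarrow> sd_act m \<phi> h \<gamma> x \<in> BQ m n"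
  unfolding sd_act_def by (rule BQ_qlin) (auto intro: BQ_single sd_list_in_bar_basis)

lemma sd_act_inv_in_BQ: "x \<in> BQ m n \<Longrightarrow> \<gamma> \<in> carrier \<Gamma> \<Longrightarrow> sd_act_inv m \<Gamma> \<phi> h \<gamma> x \<in> BQ m n"
  unfolding sd_act_inv_def by (rule sd_act_in_BQ) (auto simp: group.inv_closed[OF group_\<Gamma>])

lemma tens_rel_subset_carrier: "R n \<subseteq> carrier (F n)"
  unfolding tens_rel_def
  by (auto simp: carrier_tens_free BQ_add sd_act_inv_in_BQ
      dest!: subsetD[OF keys_diff] subsetD[OF keys_add])

lemma tens_rel_subset_tens_sub: "R n \<subseteq> H n"
  unfolding tens_sub_def by (auto intro: generate.incl)

lemma subgroup_tens_sub: "subgroup (H n) (F n)"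
  unfolding tens_sub_def tens_free_def
  by (rule group.generate_is_subgroup) (use tens_rel_subset_carrier in \<open>auto simp: tens_free_def\<close>)

lemma tens_sub_zero: "0 \<in> H n"
  using subgroup.one_closed[OF subgroup_tens_sub] by (simp add: tens_free_def)

lemma tens_sub_add: "x \<in> H n \<Longrightarrow> y \<in> H n \<Longrightarrow> x + y \<in> H n"
  using subgroup.m_closed[OF subgroup_tens_sub] by (simp add: tens_free_def)

lemma tens_sub_uminus: "x \<in> H n \<Longrightarrow> - x \<in> H n"
  using subgroup.m_inv_closed[OF subgroup_tens_sub] subgroup.subset[OF subgroup_tens_sub]
  by (force simp: tens_free_def)

lemma tens_sub_diff: "x \<in> H n \<Longrightarrow> y \<in> H n \<Longrightarrow> x - y \<in> H n"
  using tens_sub_add tens_sub_uminus by (metis diff_conv_add_uminus)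

lemma coset_eqI: "a - b \<in> H n \<Longrightarrow> coset n a = coset n b"
proof (intro equalityI subsetI)
  fix x assume ab: "a - b \<in> H n" and "x \<in> coset n a"
  then obtain h where "h \<in> H n" "x = (h + (a - b)) + b" by auto
  then show "x \<in> coset n b" using ab tens_sub_add by blast
next
  fix x assume ab: "a - b \<in> H n" and "x \<in> coset n b"
  then obtain h where "h \<in> H n" "x = (h - (a - b)) + a" by auto
  then show "x \<in> coset n a" using ab tens_sub_diff by blast
qed

lemma mem_tens_sub_if_coset_eq: "coset n a = H n \<Longrightarrow> a \<in> H n"
  using tens_sub_zero by (metis add_0 imageI)

lemma carrier_chainC: "carrier (CC n) = coset n ` carrier (F n)"
  unfolding chainC_def FactGroup_def RCOSETS_def r_coset_def by (auto simp: tens_free_def)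

lemma one_chainC: "\<one>\<^bsub>CC n\<^esub> = H n"
  unfolding chainC_def FactGroup_def by simp

lemma mult_chainC: "A \<otimes>\<^bsub>CC n\<^esub> B = {x + y |x y. x \<in> A \<and> y \<in> B}"
  unfolding chainC_def FactGroup_def set_mult_def tens_free_def by auto

lemma coset_mult: "coset n a \<otimes>\<^bsub>CC n\<^esub> coset n b = coset n (a + b)"
  unfolding mult_chainC
proof (intro equalityI subsetI)
  fix z assume "z \<in> {x + y |x y. x \<in> coset n a \<and> y \<in> coset n b}"
  then obtain h1 h2 where "h1 \<in> H n" "h2 \<in> H n" "z = (h1 + h2) + (a + b)"
    by (auto simp: algebra_simps)
  then show "z \<in> coset n (a + b)" using tens_sub_add by blast
next
  fix z assume "z \<in> coset n (a + b)"
  then obtain h where "h \<in> H n" "z = (h + a) + (0 + b)" by (auto simp: algebra_simps)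
  then show "z \<in> {x + y |x y. x \<in> coset n a \<and> y \<in> coset n b}"
    using tens_sub_zero by blast
qed

definition graded :: "nat \<Rightarrow> nat \<Rightarrow> (nat list \<Rightarrow> (nat list \<Rightarrow>\<^sub>0 rat)) \<Rightarrow> bool" where
  "graded k j f \<longleftrightarrow> (\<forall>l\<in>bar_basis m k. f l \<in> BQ m j)"

definition equivariant :: "nat \<Rightarrow> (nat list \<Rightarrow> (nat list \<Rightarrow>\<^sub>0 rat)) \<Rightarrow> bool" where
  "equivariant k f \<longleftrightarrow> (\<forall>l\<in>bar_basis m k. \<forall>h \<gamma>. h < m \<longrightarrow> \<gamma> \<in> carrier \<Gamma> \<longrightarrow>
      f (sd_list m \<phi> h \<gamma> l) = sd_act m \<phi> h \<gamma> (f l))"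

lemma graded_qlin_compose: "graded k i f \<Longrightarrow> graded i j g \<Longrightarrow> graded k j (\<lambda>l. qlin g (f l))"
  unfolding graded_def by (auto intro: BQ_qlin)

lemma tens_map_in_carrier:
  assumes "graded k j f" "c \<in> carrier (F k)"
  shows "tens_map f c \<in> carrier (F j)"
proof -
  have "z \<in> BQ m j \<times> UNIV" if "z \<in> Poly_Mapping.keys (tens_map f c)" for z
  proof -
    obtain x a where "(x, a) \<in> Poly_Mapping.keys c" "z \<in> Poly_Mapping.keys (frag_of (qlin f x, a))"
      using \<open>z \<in> _\<close> keys_frag_extend[of "\<lambda>(x, a). frag_of (qlin f x, a)" c]
      unfolding tens_map_def by auto
    moreover have "x \<in> BQ m k" using calculation(1) assms(2) by (auto simp: carrier_tens_free)
    ultimately show ?thesis using BQ_qlin assms(1) by (auto simp: graded_def)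
  qed
  then show ?thesis by (auto simp: carrier_tens_free)
qed

text \<open>\<open>tens_map\<close> is additive in the map only modulo the relations: on a generator the defect
  is a biadditivity relation.\<close>
lemma tens_map_fun_add:
  assumes "graded k j f" "graded k j g" "c \<in> carrier (F k)"
  shows "tens_map (\<lambda>l. f l + g l) c - (tens_map f c + tens_map g c) \<in> H j"
  using assms(3) unfolding tens_free_def carrier_free_Abelian_group_iff
proof (induction c rule: frag_induction)
  case zero
  then show ?case using tens_sub_zero by simp
next
  case (one z)
  obtain x a where xa: "z = (x, a)" by (cases z)
  have "qlin f x \<in> BQ m j" "qlin g x \<in> BQ m j"
    using one xa BQ_qlin assms(1,2) by (auto simp: graded_def)
  then have "frag_of (qlin f x + qlin g x, a) - frag_of (qlin f x, a) - frag_of (qlin g x, a) \<in> R j"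
    unfolding tens_rel_def by blast
  then show ?case using tens_rel_subset_tens_sub xa by (auto simp: qlin_fun_add algebra_simps)
next
  case (diff a b)
  then show ?case
    using tens_sub_diff[OF diff.IH] by (simp add: tens_map_diff algebra_simps)
qed

lemma qlin_equivariant:
  assumes "equivariant k f" "x \<in> BQ m k" "h < m" "\<gamma> \<in> carrier \<Gamma>"
  shows "qlin f (sd_act m \<phi> h \<gamma> x) = sd_act m \<phi> h \<gamma> (qlin f x)"
proof -
  have "qlin f (sd_act m \<phi> h \<gamma> x) = qlin (\<lambda>l. f (sd_list m \<phi> h \<gamma> l)) x"
    unfolding sd_act_def by (simp add: qlin_compose)
  also have "\<dots> = qlin (\<lambda>l. sd_act m \<phi> h \<gamma> (f l)) x"
    using assms by (intro qlin_cong) (auto simp: equivariant_def BQ_def)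
  also have "\<dots> = sd_act m \<phi> h \<gamma> (qlin f x)"
    unfolding sd_act_def by (simp add: qlin_compose)
  finally show ?thesis .
qed

lemma tens_map_tens_rel:
  assumes "graded k j f" "equivariant k f" "r \<in> R k"
  shows "tens_map f r \<in> R j"
  using assms(3) unfolding tens_rel_def[of m \<Gamma> \<phi> \<rho> \<sigma> k]
proof (elim UnE CollectE exE conjE)
  fix x y a
  assume "x \<in> BQ m k" "y \<in> BQ m k" "r = frag_of (x + y, a) - frag_of (x, a) - frag_of (y, a)"
  moreover have "qlin f x \<in> BQ m j" "qlin f y \<in> BQ m j"
    using calculation BQ_qlin assms(1) by (auto simp: graded_def)
  moreover have "tens_map f r
      = frag_of (qlin f x + qlin f y, a) - frag_of (qlin f x, a) - frag_of (qlin f y, a)"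
    using calculation by (simp add: tens_map_diff qlin_add)
  ultimately show "tens_map f r \<in> R j" unfolding tens_rel_def by blast
next
  fix x a b assume "x \<in> BQ m k" "r = frag_of (x, a + b) - frag_of (x, a) - frag_of (x, b)"
  moreover have "qlin f x \<in> BQ m j" using calculation BQ_qlin assms(1) by (auto simp: graded_def)
  moreover have "tens_map f r
      = frag_of (qlin f x, a + b) - frag_of (qlin f x, a) - frag_of (qlin f x, b)"
    using calculation by (simp add: tens_map_diff)
  ultimately show "tens_map f r \<in> R j" unfolding tens_rel_def by blast
next
  fix x h \<gamma> a
  assume x: "x \<in> BQ m k" and h: "h < m" and \<gamma>: "\<gamma> \<in> carrier \<Gamma>"
    and r: "r = frag_of (sd_act_inv m \<Gamma> \<phi> h \<gamma> x, a) - frag_of (x, \<rho> h (\<sigma> \<gamma> a))"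
  have inv\<gamma>: "inv\<^bsub>\<Gamma>\<^esub> \<gamma> \<in> carrier \<Gamma>" using group.inv_closed[OF group_\<Gamma> \<gamma>] .
  have "qlin f (sd_act_inv m \<Gamma> \<phi> h \<gamma> x) = sd_act_inv m \<Gamma> \<phi> h \<gamma> (qlin f x)"
    unfolding sd_act_inv_def using m_pos \<phi>_less[OF inv\<gamma>]
    by (intro qlin_equivariant[OF assms(2) x _ inv\<gamma>]) auto
  moreover have "qlin f x \<in> BQ m j" using x BQ_qlin assms(1) by (auto simp: graded_def)
  ultimately have "tens_map f r = frag_of (sd_act_inv m \<Gamma> \<phi> h \<gamma> (qlin f x), a)
      - frag_of (qlin f x, \<rho> h (\<sigma> \<gamma> a))" "qlin f x \<in> BQ m j"
    unfolding r by (simp_all add: tens_map_diff)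
  then show "tens_map f r \<in> R j"
    unfolding tens_rel_def using h \<gamma>
    by (intro UnI2 CollectI exI[of _ "qlin f x"] exI[of _ h] exI[of _ \<gamma>] exI[of _ a]) simp
qed

lemma tens_map_tens_sub:
  assumes "graded k j f" "equivariant k f" "c \<in> H k"
  shows "tens_map f c \<in> H j"
  using assms(3) unfolding tens_sub_def[of m \<Gamma> \<phi> \<rho> \<sigma> k]
proof (induction rule: generate.induct)
  case one
  then show ?case using tens_sub_zero by (simp add: tens_free_def)
next
  case (incl r)
  then show ?case using tens_map_tens_rel[OF assms(1,2)] tens_rel_subset_tens_sub by blast
next
  case (inv r)
  then have "r \<in> carrier (F k)" using tens_rel_subset_carrier by blast
  then have "inv\<^bsub>F k\<^esub> r = - r" by (simp add: tens_free_def)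
  moreover have "tens_map f (- r) = - tens_map f r"
    using tens_map_diff[of f 0 r] by simp
  ultimately show ?case
    using tens_sub_uminus tens_rel_subset_tens_sub tens_map_tens_rel[OF assms(1,2) inv] by auto
next
  case (eng c d)
  then show ?case using tens_sub_add by (simp add: tens_free_def tens_map_add)
qed

lemma induced_coset:
  assumes "graded k j f" "equivariant k f"
  shows "induced (tens_map f) (H j) (coset k a) = coset j (tens_map f a)"
proof (intro equalityI subsetI)
  fix y assume "y \<in> induced (tens_map f) (H j) (coset k a)"
  then obtain h r where "h \<in> H k" "r \<in> H j" "y = (tens_map f h + r) + tens_map f a"
    by (auto simp: induced_def tens_map_add algebra_simps)
  then show "y \<in> coset j (tens_map f a)"
    using tens_map_tens_sub[OF assms] tens_sub_add by blast
next
  fix y assume "y \<in> coset j (tens_map f a)"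
  then obtain r where "r \<in> H j" "y = tens_map f (0 + a) + r" by (auto simp: algebra_simps)
  then show "y \<in> induced (tens_map f) (H j) (coset k a)"
    unfolding induced_def using tens_sub_zero by blast
qed

text \<open>Only \<open>t\<close> has to be equivariant: \<open>s\<close> is applied to a representative of the cycle,
  never to a coset.\<close>
lemma exact_if_homotopy:
  assumes f: "graded k j f" and g: "graded i k g" and s: "graded k i s"
    and t: "graded j k t" "equivariant j t"
    and homotopy: "\<And>l. l \<in> bar_basis m k \<Longrightarrow> qlin g (s l) + qlin t (f l) = Poly_Mapping.single l 1"
    and y: "y \<in> carrier (F k)" "tens_map f y \<in> H j"
  shows "\<exists>c\<in>carrier (F i). y - tens_map g c \<in> H k"
proof
  show "tens_map s y \<in> carrier (F i)" by (rule tens_map_in_carrier[OF s y(1)])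
  let ?gs = "\<lambda>l. qlin g (s l)" and ?tf = "\<lambda>l. qlin t (f l)"
  have "tens_map (\<lambda>l. ?gs l + ?tf l) y = y"
    using tens_map_cong[OF y(1), of "\<lambda>l. ?gs l + ?tf l" "\<lambda>l. Poly_Mapping.single l 1"]
    by (simp add: homotopy tens_map_single_one)
  then have split: "y - tens_map g (tens_map s y)
      = (tens_map (\<lambda>l. ?gs l + ?tf l) y - (tens_map ?gs y + tens_map ?tf y)) + tens_map ?tf y"
    by (simp add: tens_map_compose)
  moreover have "tens_map (\<lambda>l. ?gs l + ?tf l) y - (tens_map ?gs y + tens_map ?tf y) \<in> H k"
    using graded_qlin_compose[OF s g] graded_qlin_compose[OF f t(1)] y(1) by (rule tens_map_fun_add)
  moreover have "tens_map ?tf y \<in> H k"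
    using tens_map_tens_sub[OF t y(2)] by (simp add: tens_map_compose)
  ultimately show "y - tens_map g (tens_map s y) \<in> H k"
    by (simp only: split tens_sub_add)
qed

lemma image_induced_tens_map:
  assumes "graded i k g" "equivariant i g"
  shows "induced (tens_map g) (H k) ` carrier (CC i) = (\<lambda>c. coset k (tens_map g c)) ` carrier (F i)"
  unfolding carrier_chainC image_comp by (simp add: comp_def induced_coset[OF assms])

lemma translate_image_induced_tens_map:
  assumes g: "graded i k g" "equivariant i g"
    and Y: "Y \<in> induced (tens_map g) (H k) ` carrier (CC i)" (is "Y \<in> ?B")
  shows "(\<lambda>U. U \<otimes>\<^bsub>CC k\<^esub> Y) ` ?B = ?B"
proof -
  obtain c' where c': "c' \<in> carrier (F i)" "Y = coset k (tens_map g c')"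
    using Y unfolding image_induced_tens_map[OF g] by blast
  have "(\<lambda>U. U \<otimes>\<^bsub>CC k\<^esub> Y) ` ?B = (\<lambda>c. coset k (tens_map g (c + c'))) ` carrier (F i)"
    unfolding image_induced_tens_map[OF g] c'(2) image_comp
    by (simp add: comp_def coset_mult tens_map_add)
  also have "\<dots> = (\<lambda>c. coset k (tens_map g c)) ` ((\<lambda>c. c + c') ` carrier (F i))"
    by (simp only: image_image)
  also have "(\<lambda>c. c + c') ` carrier (F i) = carrier (F i)"
  proof (intro equalityI subsetI)
    fix c assume "c \<in> carrier (F i)"
    then show "c \<in> (\<lambda>c. c + c') ` carrier (F i)"
      using c'(1) tens_free_diff by (intro image_eqI[of _ _ "c - c'"]) auto
  qed (use c'(1) tens_free_add in auto)
  finally show ?thesis unfolding image_induced_tens_map[OF g] .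
qed

lemma tens_sub_in_kernel:
  assumes "graded k j f" "equivariant k f"
  shows "H k \<in> {Y \<in> carrier (CC k). induced (tens_map f) (H j) Y = H j}"
proof -
  have "0 \<in> carrier (F k)" by (simp add: carrier_tens_free)
  then have "coset k 0 \<in> carrier (CC k)" unfolding carrier_chainC by (rule imageI)
  moreover have "induced (tens_map f) (H j) (coset k 0) = H j"
    using induced_coset[OF assms, of 0] by simp
  ultimately show ?thesis by simp
qed

lemma kernel_subset_image_induced:
  assumes f: "graded k j f" "equivariant k f" and g: "graded i k g" "equivariant i g"
    and exact: "\<And>y. \<lbrakk>y \<in> carrier (F k); tens_map f y \<in> H j\<rbrakk>
                   \<Longrightarrow> \<exists>c\<in>carrier (F i). y - tens_map g c \<in> H k"
  shows "{Y \<in> carrier (CC k). induced (tens_map f) (H j) Y = H j}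
      \<subseteq> induced (tens_map g) (H k) ` carrier (CC i)"
proof
  fix Y assume "Y \<in> {Y \<in> carrier (CC k). induced (tens_map f) (H j) Y = H j}"
  then obtain y where y: "y \<in> carrier (F k)" "Y = coset k y" "coset j (tens_map f y) = H j"
    unfolding carrier_chainC by (auto simp: induced_coset[OF f])
  then obtain c where "c \<in> carrier (F i)" "y - tens_map g c \<in> H k"
    using exact mem_tens_sub_if_coset_eq by blast
  then show "Y \<in> induced (tens_map g) (H k) ` carrier (CC i)"
    unfolding image_induced_tens_map[OF g] y(2) using coset_eqI by blast
qed

text \<open>Both \<open>QHGamma\<close> and \<open>ker_mod_im\<close> are quotients of this shape.\<close>
lemma trivial_monoid_kernel_mod_image:
  assumes f: "graded k j f" "equivariant k f" and g: "graded i k g" "equivariant i g"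
    and exact: "\<And>y. \<lbrakk>y \<in> carrier (F k); tens_map f y \<in> H j\<rbrakk>
                   \<Longrightarrow> \<exists>c\<in>carrier (F i). y - tens_map g c \<in> H k"
  shows "trivial_monoid (CC k\<lparr>carrier := {Y \<in> carrier (CC k). induced (tens_map f) (H j) Y = H j}\<rparr>
                           Mod (induced (tens_map g) (H k) ` carrier (CC i)))"
    (is "trivial_monoid (CC k\<lparr>carrier := ?Z\<rparr> Mod ?B)")
proof -
  note translate = translate_image_induced_tens_map[OF g]
  note cycles_are_boundaries = kernel_subset_image_induced[OF f g exact]
  note one_cycle = tens_sub_in_kernel[OF f]
  have "carrier (CC k\<lparr>carrier := ?Z\<rparr> Mod ?B) = (\<lambda>Y. (\<lambda>U. U \<otimes>\<^bsub>CC k\<^esub> Y) ` ?B) ` ?Z"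
    by (simp add: FactGroup_def RCOSETS_def r_coset_def UNION_singleton_eq_range)
  also have "\<dots> = (\<lambda>Y. ?B) ` ?Z"
    by (intro image_cong refl translate) (use cycles_are_boundaries in blast)
  also have "\<dots> = {?B}"
    using one_cycle by blast
  finally have "carrier (CC k\<lparr>carrier := ?Z\<rparr> Mod ?B) = {?B}" .
  moreover have "?B <#>\<^bsub>CC k\<^esub> ?B = ?B"
  proof -
    have "?B <#>\<^bsub>CC k\<^esub> ?B = (\<Union>Y\<in>?B. (\<lambda>U. U \<otimes>\<^bsub>CC k\<^esub> Y) ` ?B)"
      unfolding set_mult_def by (subst SUP_commute) (simp only: UNION_singleton_eq_range)
    also have "\<dots> = (\<Union>Y\<in>?B. ?B)"
      by (rule SUP_cong[OF refl translate])
    also have "\<dots> = ?B"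
      using one_cycle cycles_are_boundaries by (intro UN_constant_eq[of "H k"]) blast+
    finally show ?thesis .
  qed
  ultimately show ?thesis
    unfolding trivial_monoid_def FactGroup_def set_mult_def by simp
qed

section \<open>The maps \<open>N\<close>, \<open>D\<close> and the averaged cone\<close>

lemma graded_single_scalar: "graded k k (\<lambda>l. Poly_Mapping.single l c)"
  unfolding graded_def by (simp add: BQ_single)

lemma equivariant_single_scalar: "equivariant k (\<lambda>l. Poly_Mapping.single l c)"
  unfolding equivariant_def by (simp add: sd_act_single)

lemma mulN_eq: "mulN m l = (\<Sum>x<m. Poly_Mapping.single [x] 1)"
  unfolding mulN_def atLeast0LessThan
  using sum.reindex_bij_betw[OF bij_betw_add_mod[OF m_pos, of "hd l"],
      of "\<lambda>x. Poly_Mapping.single [x] 1"]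
  by simp

lemma mulD_eq: "hd l < m \<Longrightarrow> mulD m l = mulN m l - Poly_Mapping.single [hd l] (of_nat m)"
proof -
  assume "hd l < m"
  have "{0..<m} = insert 0 {1..<m}" using m_pos by auto
  then have "mulN m l = Poly_Mapping.single [hd l] 1
      + (\<Sum>k\<in>{1..<m}. Poly_Mapping.single [(hd l + k) mod m] (1::rat))"
    unfolding mulN_def using \<open>hd l < m\<close> by (simp add: sum.insert)
  moreover have "Poly_Mapping.single [hd l] (of_nat m :: rat)
      = Poly_Mapping.single [hd l] 1 + Poly_Mapping.single [hd l] (of_nat (m - 1))"
    using m_pos by (simp flip: single_add)
  ultimately show ?thesis unfolding mulD_def by (simp add: algebra_simps)
qed

lemma mulN_sub_mulD: "l \<in> bar_basis m 0 \<Longrightarrow>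
    qscale (1 / of_nat m) (mulN m l) - qscale (1 / of_nat m) (mulD m l) = Poly_Mapping.single l 1"
proof -
  assume "l \<in> bar_basis m 0"
  then obtain g where "l = [g]" "g < m" by (cases l) (auto simp: bar_basis_def)
  then show ?thesis using m_pos by (simp add: mulD_eq flip: qscale_diff)
qed

lemma graded_mulN: "graded 0 0 (mulN m)"
  unfolding graded_def mulN_eq by (auto intro!: BQ_sum BQ_single simp: bar_basis_def)

lemma graded_mulD: "graded 0 0 (mulD m)"
  unfolding graded_def mulD_def using m_pos
  by (auto intro!: BQ_sum BQ_single BQ_diff simp: bar_basis_def length_Suc_conv)

lemma sd_act_norm_fixed:
  assumes "\<gamma> \<in> carrier \<Gamma>"
  shows "sd_act m \<phi> h \<gamma> (\<Sum>x<m. Poly_Mapping.single [x] 1) = (\<Sum>x<m. Poly_Mapping.single [x] 1)"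
  unfolding sd_act_sum sd_act_single sd_list_Cons
  using sum.reindex_bij_betw[OF bij_betw_affine_\<phi>[OF assms, of h],
      of "\<lambda>y. Poly_Mapping.single [y] (1::rat)"]
  by simp

lemma equivariant_mulN: "equivariant 0 (mulN m)"
  unfolding equivariant_def mulN_eq using sd_act_norm_fixed by simp

lemma equivariant_mulD: "equivariant 0 (mulD m)"
  unfolding equivariant_def
proof (intro ballI allI impI)
  fix l h \<gamma> assume "l \<in> bar_basis m 0" "h < m" and \<gamma>: "\<gamma> \<in> carrier \<Gamma>"
  then obtain g where g: "l = [g]" "g < m" by (cases l) (auto simp: bar_basis_def)
  then show "mulD m (sd_list m \<phi> h \<gamma> l) = sd_act m \<phi> h \<gamma> (mulD m l)"
    using m_pos sd_act_norm_fixed[OF \<gamma>, of h]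
    by (simp add: mulD_eq mulN_eq sd_list_Cons sd_act_diff sd_act_single)
qed

lemma map_\<phi>_bar_merge:
  assumes "1 \<le> i" "i < length gs" "set gs \<subseteq> {..<m}" "\<gamma> \<in> carrier \<Gamma>"
  shows "map (\<phi> \<gamma>) (bar_merge m gs i) = bar_merge m (map (\<phi> \<gamma>) gs) i"
proof -
  have "gs ! (i - 1) \<in> set gs" "gs ! i \<in> set gs" using assms(1,2) by auto
  then have "gs ! (i - 1) < m" "gs ! i < m" using assms(3) by auto
  then show ?thesis using assms by (simp add: bar_merge_def take_map drop_map \<phi>_add_mod)
qed

lemma graded_bar_d: "graded (Suc n) n (bar_d m)"
  unfolding graded_def
proof
  fix l assume "l \<in> bar_basis m (Suc n)"
  then obtain g x xs where g: "l = g # x # xs" "length xs = n" "g < m" "x < m" "set xs \<subseteq> {..<m}"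
    by (auto simp: bar_basis_def length_Suc_conv)
  then show "bar_d m l \<in> BQ m n"
    unfolding g(1) bar_d_Cons using m_pos length_bar_merge set_bar_merge[of m "x # xs"]
    by (intro BQ_add BQ_sum BQ_single) (auto simp: bar_basis_def dest: in_set_butlastD)
qed

lemma equivariant_bar_d: "equivariant (Suc n) (bar_d m)"
  unfolding equivariant_def
proof (intro ballI allI impI)
  fix l h \<gamma> assume "l \<in> bar_basis m (Suc n)" "h < m" and \<gamma>: "\<gamma> \<in> carrier \<Gamma>"
  then obtain g gs where g: "l = g # gs" "gs \<noteq> []" "g < m" "set gs \<subseteq> {..<m}"
    by (cases l) (auto simp: bar_basis_def simp flip: length_greater_0_conv)
  have "hd gs < m" using g(2,4) hd_in_set by blast
  then have merge_first:
    "((h + \<phi> \<gamma> g) mod m + \<phi> \<gamma> (hd gs)) mod m = (h + \<phi> \<gamma> ((g + hd gs) mod m)) mod m"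
    using \<phi>_add_mod[OF \<gamma> g(3)] by (simp add: mod_add_left_eq mod_add_right_eq add.assoc)
  have merge_inner: "(\<Sum>i\<in>{1..<length gs}.
        Poly_Mapping.single ((h + \<phi> \<gamma> g) mod m # bar_merge m (map (\<phi> \<gamma>) gs) i) ((-1::rat) ^ i))
      = (\<Sum>i\<in>{1..<length gs}.
        Poly_Mapping.single ((h + \<phi> \<gamma> g) mod m # map (\<phi> \<gamma>) (bar_merge m gs i)) ((-1) ^ i))"
    by (rule sum.cong) (use map_\<phi>_bar_merge[OF _ _ g(4) \<gamma>] in auto)
  show "bar_d m (sd_list m \<phi> h \<gamma> l) = sd_act m \<phi> h \<gamma> (bar_d m l)"
    unfolding g(1) sd_list_Cons bar_d_Cons length_map merge_inner sd_act_add sd_act_sum sd_act_single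
    using g(2) merge_first by (simp add: hd_map map_tl map_butlast)
qed

lemma graded_avg_cone: "graded n (Suc n) (avg_cone m)"
  unfolding graded_def
proof
  fix l assume "l \<in> bar_basis m n"
  then obtain g gs where "l = g # gs" "length gs = n" "set gs \<subseteq> {..<m}"
    by (cases l) (auto simp: bar_basis_def)
  then show "avg_cone m l \<in> BQ m (Suc n)"
    unfolding avg_cone_def using m_pos by (intro BQ_sum BQ_single) (auto simp: bar_basis_def)
qed

lemma equivariant_avg_cone: "equivariant n (avg_cone m)"
  unfolding equivariant_def
proof (intro ballI allI impI)
  fix l h \<gamma> assume "l \<in> bar_basis m n" "h < m" and \<gamma>: "\<gamma> \<in> carrier \<Gamma>"
  then obtain g gs where g: "l = g # gs" "g < m" by (cases l) (auto simp: bar_basis_def)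
  let ?g' = "(h + \<phi> \<gamma> g) mod m"
  let ?G = "\<lambda>y. Poly_Mapping.single (y # ((?g' + m - y) mod m) # map (\<phi> \<gamma>) gs)
      (1 / of_nat m :: rat)"
  have "avg_cone m (sd_list m \<phi> h \<gamma> l) = (\<Sum>y<m. ?G y)"
    unfolding avg_cone_def g(1) sd_list_Cons by simp
  also have "\<dots> = (\<Sum>j<m. ?G ((h + \<phi> \<gamma> j) mod m))"
    using sum.reindex_bij_betw[OF bij_betw_affine_\<phi>[OF \<gamma>, of h], of ?G] by simp
  also have "\<dots> = (\<Sum>j<m.
      Poly_Mapping.single (sd_list m \<phi> h \<gamma> (j # ((g + m - j) mod m) # gs)) (1 / of_nat m))"
  proof (rule sum.cong)
    fix j assume j: "j \<in> {..<m}"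
    let ?a = "(g + m - j) mod m"
    have a: "?a < m" using m_pos by simp
    have "(?a + j) mod m = g" using j add_mod_sub_mod[of j m g] g(2) by (simp add: add.commute)
    then have "(\<phi> \<gamma> ?a + \<phi> \<gamma> j) mod m = \<phi> \<gamma> g"
      using \<phi>_add_mod[OF \<gamma> a, of j] j by simp
    then have "(\<phi> \<gamma> ?a + (h + \<phi> \<gamma> j) mod m) mod m = ?g'"
      by (metis mod_add_left_eq mod_add_right_eq add.left_commute)
    then have "\<phi> \<gamma> ?a = (?g' + m - (h + \<phi> \<gamma> j) mod m) mod m"
      using mod_sub_eqI \<phi>_less[OF \<gamma> a] m_pos by simp
    then show "?G ((h + \<phi> \<gamma> j) mod m)
        = Poly_Mapping.single (sd_list m \<phi> h \<gamma> (j # ?a # gs)) (1 / of_nat m)"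
      by (simp add: sd_list_Cons)
  qed simp
  also have "\<dots> = sd_act m \<phi> h \<gamma> (avg_cone m l)"
    unfolding avg_cone_def sd_act_sum sd_act_single g(1) by simp
  finally show "avg_cone m (sd_list m \<phi> h \<gamma> l) = sd_act m \<phi> h \<gamma> (avg_cone m l)" .
qed

lemma avg_cone_homotopy:
  assumes "l \<in> bar_basis m (Suc n)"
  shows "qlin (bar_d m) (avg_cone m l) + qlin (avg_cone m) (bar_d m l) = Poly_Mapping.single l 1"
proof -
  obtain g gs where g: "l = g # gs" "gs \<noteq> []" "g < m"
    using assms by (cases l) (auto simp: bar_basis_def simp flip: length_greater_0_conv)
  define q :: rat where "q = 1 / of_nat m"
  define k where "k = length gs"
  define x where "x j = (g + m - j) mod m" for j
  define y where "y j = ((g + hd gs) mod m + m - j) mod m" for j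
  define C where "C j = Poly_Mapping.single (j # y j # tl gs) 1
      + (\<Sum>i\<in>{1..<k}. Poly_Mapping.single (j # x j # bar_merge m gs i) ((-1) ^ i))
      + Poly_Mapping.single (j # x j # butlast gs) ((-1::rat) ^ k)" for j
  have cone_terms: "qlin (bar_d m) (avg_cone m l) = (\<Sum>j<m. qscale q (bar_d m (j # x j # gs)))"
    unfolding g(1) avg_cone_def qlin_sum qlin_single q_def x_def by simp
  have bar_d_terms: "qlin (avg_cone m) (bar_d m l) = (\<Sum>j<m. qscale q (C j))"
  proof -
    have "qlin (avg_cone m) (bar_d m l) = avg_cone m (((g + hd gs) mod m) # tl gs)
        + (\<Sum>i\<in>{1..<k}. qscale ((-1) ^ i) (avg_cone m (g # bar_merge m gs i)))
        + qscale ((-1) ^ k) (avg_cone m (g # butlast gs))"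
      unfolding g(1) bar_d_Cons qlin_add qlin_sum qlin_single k_def by simp
    also have "\<dots> = (\<Sum>j<m. qscale q (C j))"
      unfolding avg_cone_def C_def x_def y_def q_def
      by (simp add: qscale_add qscale_sum sum.distrib mult.commute) (rule sum.swap)
    finally show ?thesis .
  qed
  have "qscale q (bar_d m (j # x j # gs)) + qscale q (C j) = Poly_Mapping.single l q"
    if "j < m" for j
  proof -
    have "(j + x j) mod m = g" "(x j + hd gs) mod m = y j"
      using add_mod_sub_mod[OF that g(3)] mod_sub_add_mod[OF that g(3)]
      by (simp_all add: x_def y_def)
    then have "bar_d m (j # x j # gs) = Poly_Mapping.single l 1 - C j"
      unfolding bar_d_Cons_Cons[OF g(2)] C_def g(1) k_def by simp
    then show ?thesis by (simp flip: qscale_add)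
  qed
  then have "qlin (bar_d m) (avg_cone m l) + qlin (avg_cone m) (bar_d m l)
      = (\<Sum>j<m. Poly_Mapping.single l q)"
    unfolding cone_terms bar_d_terms sum.distrib[symmetric] by (intro sum.cong) auto
  also have "\<dots> = Poly_Mapping.single l (of_nat m * q)"
    by (induction m) (simp_all add: single_add algebra_simps)
  also have "of_nat m * q = 1" using m_pos by (simp add: q_def)
  finally show ?thesis .
qed

lemma trivial_QHGamma: "trivial_monoid (QHGamma m \<Gamma> \<phi> \<rho> \<sigma> (Suc n))"
proof -
  note exact = exact_if_homotopy[OF graded_bar_d graded_bar_d graded_avg_cone
      graded_avg_cone equivariant_avg_cone avg_cone_homotopy]
  have "QHGamma m \<Gamma> \<phi> \<rho> \<sigma> (Suc n) = CC (Suc n)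
      \<lparr>carrier := {Y \<in> carrier (CC (Suc n)). induced (tens_map (bar_d m)) (H n) Y = H n}\<rparr>
      Mod (induced (tens_map (bar_d m)) (H (Suc n)) ` carrier (CC (Suc (Suc n))))"
    by (simp only: QHGamma_def bdry_def one_chainC diff_Suc_1 add_diff_cancel_right'
        flip: Suc_eq_plus1)
  then show ?thesis
    using trivial_monoid_kernel_mod_image[OF graded_bar_d equivariant_bar_d graded_bar_d
        equivariant_bar_d exact] by (simp only:)
qed

lemma trivial_ker_mod_im:
  assumes f: "graded 0 0 f" "equivariant 0 f" and g: "graded 0 0 g" "equivariant 0 g"
    and splitting:
      "\<And>l. l \<in> bar_basis m 0 \<Longrightarrow> qscale c (g l) - qscale c (f l) = Poly_Mapping.single l 1"
  shows "trivial_monoid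
    (ker_mod_im (Vsp m \<Gamma> \<phi> \<rho> \<sigma>) (induced (tens_map f) (H 0)) (induced (tens_map g) (H 0)))"
proof -
  have "qlin g (Poly_Mapping.single l c) + qlin (\<lambda>l. Poly_Mapping.single l (- c)) (f l)
      = Poly_Mapping.single l 1" if "l \<in> bar_basis m 0" for l
    using splitting[OF that] by (simp add: qlin_single_scalar qscale_minus_left)
  note exact = exact_if_homotopy[OF f(1) g(1) graded_single_scalar graded_single_scalar
      equivariant_single_scalar this]
  show ?thesis
    unfolding ker_mod_im_def Vsp_def one_chainC
    by (rule trivial_monoid_kernel_mod_image[OF f g exact])
qed

end

theorem theorem4p3:
  fixes m :: nat and \<Gamma> :: "('g, 'b) monoid_scheme" and \<phi> :: "'g \<Rightarrow> nat \<Rightarrow> nat"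
    and \<rho> :: "nat \<Rightarrow> 'a::ab_group_add \<Rightarrow> 'a" and \<sigma> :: "'g \<Rightarrow> 'a \<Rightarrow> 'a" and n :: nat
  assumes "m \<ge> 2"
    and "group \<Gamma>"
    and "zm_aut_action m \<Gamma> \<phi>"
    and "zm_action_nontrivial m \<Gamma> \<phi>"
    and "sd_module m \<Gamma> \<phi> \<rho> \<sigma>"
    and "n \<ge> 1"
  shows "QHGamma m \<Gamma> \<phi> \<rho> \<sigma> (2 * n - 1)
           \<cong> ker_mod_im (Vsp m \<Gamma> \<phi> \<rho> \<sigma>) (Dstar m \<Gamma> \<phi> \<rho> \<sigma>) (Nstar m \<Gamma> \<phi> \<rho> \<sigma>)
      \<and> QHGamma m \<Gamma> \<phi> \<rho> \<sigma> (2 * n)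
           \<cong> ker_mod_im (Vsp m \<Gamma> \<phi> \<rho> \<sigma>) (Nstar m \<Gamma> \<phi> \<rho> \<sigma>) (Dstar m \<Gamma> \<phi> \<rho> \<sigma>)"
proof -
  interpret zm_equivariant_chains m \<Gamma> \<phi> \<rho> \<sigma>
    using assms(1-3) by (intro zm_equivariant_chains.intro) auto
  have homology: "trivial_monoid (QHGamma m \<Gamma> \<phi> \<rho> \<sigma> k)" if "1 \<le> k" for k
    using trivial_QHGamma[of "k - 1"] that by simp
  have "trivial_monoid (ker_mod_im (Vsp m \<Gamma> \<phi> \<rho> \<sigma>) (Dstar m \<Gamma> \<phi> \<rho> \<sigma>) (Nstar m \<Gamma> \<phi> \<rho> \<sigma>))"
    unfolding Dstar_def Nstar_def
    by (rule trivial_ker_mod_im[OF graded_mulD equivariant_mulD graded_mulN equivariant_mulN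
          mulN_sub_mulD])
  moreover have "trivial_monoid (ker_mod_im (Vsp m \<Gamma> \<phi> \<rho> \<sigma>) (Nstar m \<Gamma> \<phi> \<rho> \<sigma>) (Dstar m \<Gamma> \<phi> \<rho> \<sigma>))"
    unfolding Dstar_def Nstar_def
    using mulN_sub_mulD
    by (intro trivial_ker_mod_im[OF graded_mulN equivariant_mulN graded_mulD equivariant_mulD,
          where c = "- 1 / of_nat m"]) (simp add: qscale_minus_left)
  moreover have "1 \<le> 2 * n - 1" "1 \<le> 2 * n" using assms(6) by auto
  ultimately show ?thesis
    using homology trivial_monoids_isomorphic by blast
qed

end
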